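(* Let $A\in\mathfrak{B}_{n\times m}$ with $r(A)=\langle x_1,\dots,x_n\rangle$, suppose $x_1=2^s-1$ for some integer $0\le s\le m$, and suppose $\zeta_1(A)=n$ (i.e. all rows of $A$ equal the first row). Then $A$ is canonical.
   Context: $\mathfrak{B}_{n\times m}$ denotes the set of all $n\times m$ matrices with entries in $\{0,1\}$. For $A=[a_{ij}]\in\mathfrak{B}_{n\times m}$, $r(A)=\langle x_1,\dots,x_n\rangle$ with $x_i=\sum_{j=1}^m a_{ij}2^{m-j}$; tuples are compared lexicographically. $\zeta_1(A)$ is the number of indices $k$ with $x_k=x_1$. $A\sim B$ means $A=XBY$ for permutation matrices $X,Y$. $A$ is canonical if $r(A)$ is the lexicographically minimal element of $\{r(B)\mid B\sim A\}$. *)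

theory Defs
  imports Main
begin

definition binmat :: "nat \<Rightarrow> nat \<Rightarrow> (nat \<Rightarrow> nat \<Rightarrow> nat) \<Rightarrow> bool" where
  "binmat n m A \<longleftrightarrow> (\<forall>i<n. \<forall>j<m. A i j \<in> {0, 1})"

text \<open>Row i encoded as sum_{j=1}^m a_ij 2^(m-j); with 0-based j this is 2^(m-1-j).\<close>
definition row_val :: "nat \<Rightarrow> (nat \<Rightarrow> nat \<Rightarrow> nat) \<Rightarrow> nat \<Rightarrow> nat" where
  "row_val m A i = (\<Sum>j<m. A i j * 2 ^ (m - 1 - j))"

definition rtuple :: "nat \<Rightarrow> nat \<Rightarrow> (nat \<Rightarrow> nat \<Rightarrow> nat) \<Rightarrow> nat list" where
  "rtuple n m A = map (row_val m A) [0..<n]"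

definition zeta1 :: "nat \<Rightarrow> nat \<Rightarrow> (nat \<Rightarrow> nat \<Rightarrow> nat) \<Rightarrow> nat" where
  "zeta1 n m A = card {k. k < n \<and> row_val m A k = row_val m A 0}"

text \<open>A = X B Y with permutation matrices X, Y: rows and columns of B permuted.\<close>
definition perm_equiv :: "nat \<Rightarrow> nat \<Rightarrow> (nat \<Rightarrow> nat \<Rightarrow> nat) \<Rightarrow> (nat \<Rightarrow> nat \<Rightarrow> nat) \<Rightarrow> bool" where
  "perm_equiv n m A B \<longleftrightarrow>
     (\<exists>\<sigma> \<tau>. bij_betw \<sigma> {..<n} {..<n} \<and> bij_betw \<tau> {..<m} {..<m} \<and>
        (\<forall>i<n. \<forall>j<m. A i j = B (\<sigma> i) (\<tau> j)))"

definition canonical :: "nat \<Rightarrow> nat \<Rightarrow> (nat \<Rightarrow> nat \<Rightarrow> nat) \<Rightarrow> bool" where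
  "canonical n m A \<longleftrightarrow>
     (\<forall>B. binmat n m B \<and> perm_equiv n m B A \<longrightarrow> lexordp_eq (rtuple n m A) (rtuple n m B))"

end

theory Submission
  imports Defs
begin

text \<open>Every row of A encodes 2^s - 1, so it has exactly s ones. Permuting rows and columns
  preserves the number of ones per row, so every row of an equivalent matrix B also has s ones,
  and a sum of s distinct powers of two is at least 2^s - 1. Hence r(A) is pointwise, and so
  lexicographically, below r(B).\<close>

lemma lexordp_eq_if_list_all2_le:
  "list_all2 (\<le>) xs (ys :: 'a::order list) \<Longrightarrow> lexordp_eq xs ys"
  by (induction xs ys rule: list_all2_induct) auto

lemma sum_pow2_ge_card:
  "finite E \<Longrightarrow> 2 ^ card E - 1 \<le> (\<Sum>e\<in>E. (2::nat) ^ e)"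
proof (induction E rule: finite_linorder_max_induct)
  case (insert b E)
  have "card E \<le> b"
    using card_mono[of "{..<b}" E] insert.hyps(2) by auto
  have "b \<notin> E"
    using insert.hyps(2) by blast
  then have "2 ^ card (insert b E) - 1 = 2 ^ card E + (2 ^ card E - 1 :: nat)"
    using insert.hyps(1) by simp
  also have "\<dots> \<le> 2 ^ b + (\<Sum>e\<in>E. 2 ^ e)"
    using \<open>card E \<le> b\<close> insert.IH by (intro add_mono) simp_all
  also have "\<dots> = (\<Sum>e\<in>insert b E. 2 ^ e)"
    using \<open>b \<notin> E\<close> insert.hyps(1) by simp
  finally show ?case .
qed simp

lemma sum_pow2_lessThan: "(\<Sum>e<s. (2::nat) ^ e) = 2 ^ s - 1"
  unfolding lessThan_def by (rule mask_eq_sum_exp[symmetric])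

lemma sum_pow2_eq_mask_iff:
  assumes "finite E"
  shows "(\<Sum>e\<in>E. (2::nat) ^ e) = 2 ^ s - 1 \<longleftrightarrow> E = {..<s}"
proof
  assume sum_E: "(\<Sum>e\<in>E. (2::nat) ^ e) = 2 ^ s - 1"
  have "E \<subseteq> {..<s}"
  proof
    fix x assume "x \<in> E"
    then have "(2::nat) ^ x \<le> 2 ^ s - 1"
      using member_le_sum[of x E "\<lambda>e. (2::nat) ^ e"] assms sum_E by simp
    moreover have "(0::nat) < 2 ^ s"
      by simp
    ultimately have "(2::nat) ^ x < 2 ^ s"
      by linarith
    then show "x \<in> {..<s}"
      by simp
  qed
  then have "(\<Sum>e<s. (2::nat) ^ e) = (\<Sum>e\<in>{..<s} - E. 2 ^ e) + (\<Sum>e\<in>E. 2 ^ e)"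
    by (rule sum.subset_diff[OF _ finite_lessThan])
  then have "(\<Sum>e\<in>{..<s} - E. (2::nat) ^ e) = 0"
    using sum_pow2_lessThan[of s] sum_E by linarith
  then have "{..<s} \<subseteq> E"
    by auto
  with \<open>E \<subseteq> {..<s}\<close> show "E = {..<s}"
    by blast
qed (simp add: sum_pow2_lessThan)

definition row_support :: "nat \<Rightarrow> (nat \<Rightarrow> nat \<Rightarrow> nat) \<Rightarrow> nat \<Rightarrow> nat set" where
  "row_support m M i = {j. j < m \<and> M i j = 1}"

definition row_exponents :: "nat \<Rightarrow> (nat \<Rightarrow> nat \<Rightarrow> nat) \<Rightarrow> nat \<Rightarrow> nat set" where
  "row_exponents m M i = (\<lambda>j. m - 1 - j) ` row_support m M i"

lemma row_val_eq_sum_row_exponents: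
  assumes "\<forall>j<m. M i j \<in> {0, 1}"
  shows "row_val m M i = (\<Sum>e\<in>row_exponents m M i. 2 ^ e)"
proof -
  have inj: "inj_on (\<lambda>j. m - 1 - j) (row_support m M i)"
    by (auto simp: inj_on_def row_support_def)
  have "row_val m M i = (\<Sum>j<m. if M i j = 1 then 2 ^ (m - 1 - j) else 0)"
    unfolding row_val_def using assms by (intro sum.cong) auto
  also have "\<dots> = (\<Sum>j\<in>row_support m M i. 2 ^ (m - 1 - j))"
    by (simp add: sum.If_cases row_support_def lessThan_def Collect_conj_eq)
  also have "\<dots> = (\<Sum>e\<in>row_exponents m M i. 2 ^ e)"
    unfolding row_exponents_def by (subst sum.reindex[OF inj]) (simp add: comp_def)
  finally show ?thesis .
qed

lemma card_row_exponents: "card (row_exponents m M i) = card (row_support m M i)"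
  unfolding row_exponents_def
  by (rule card_image) (auto simp: inj_on_def row_support_def)

lemma finite_row_exponents: "finite (row_exponents m M i)"
  by (simp add: row_exponents_def row_support_def)

lemma row_val_ge_card_row_support:
  "\<forall>j<m. M i j \<in> {0, 1} \<Longrightarrow> 2 ^ card (row_support m M i) - 1 \<le> row_val m M i"
  using sum_pow2_ge_card[OF finite_row_exponents]
  by (simp add: row_val_eq_sum_row_exponents card_row_exponents)

lemma card_row_support_if_row_val_eq_mask:
  assumes "\<forall>j<m. M i j \<in> {0, 1}" and "row_val m M i = 2 ^ s - 1"
  shows "card (row_support m M i) = s"
proof -
  have "row_exponents m M i = {..<s}"
    using assms sum_pow2_eq_mask_iff[OF finite_row_exponents]
    by (simp add: row_val_eq_sum_row_exponents)
  then show ?thesis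
    by (metis card_lessThan card_row_exponents)
qed

lemma card_row_support_permute_columns:
  assumes "bij_betw \<tau> {..<m} {..<m}" and "\<forall>j<m. B i j = A k (\<tau> j)"
  shows "card (row_support m B i) = card (row_support m A k)"
proof -
  have image: "\<tau> ` row_support m B i = row_support m A k"
  proof
    show "\<tau> ` row_support m B i \<subseteq> row_support m A k"
      using assms by (auto simp: row_support_def bij_betw_def)
  next
    show "row_support m A k \<subseteq> \<tau> ` row_support m B i"
    proof
      fix j assume "j \<in> row_support m A k"
      moreover have "j \<in> \<tau> ` {..<m}"
        using assms(1) \<open>j \<in> row_support m A k\<close> by (auto simp: row_support_def bij_betw_def)
      then obtain j' where "j' < m" "\<tau> j' = j"
        by auto
      ultimately show "j \<in> \<tau> ` row_support m B i"
        using assms(2) by (auto simp: row_support_def)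
    qed
  qed
  have "bij_betw \<tau> (row_support m B i) (row_support m A k)"
    by (rule bij_betw_subset[OF assms(1) _ image]) (auto simp: row_support_def)
  then show ?thesis
    by (rule bij_betw_same_card)
qed

lemma row_val_eq_first_if_zeta1:
  assumes "zeta1 n m A = n" and "k < n"
  shows "row_val m A k = row_val m A 0"
proof -
  have "{k. k < n \<and> row_val m A k = row_val m A 0} = {..<n}"
    using assms(1) unfolding zeta1_def
    by (intro card_subset_eq) auto
  with assms(2) show ?thesis
    by blast
qed

theorem proposition7:
  fixes n m s :: nat and A :: "nat \<Rightarrow> nat \<Rightarrow> nat"
  assumes "binmat n m A"
    and "n \<ge> 1"
    and "s \<le> m"
    and "row_val m A 0 = 2 ^ s - 1"
    and "zeta1 n m A = n"
  shows "canonical n m A"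
  unfolding canonical_def
proof (intro allI impI)
  fix B assume B: "binmat n m B \<and> perm_equiv n m B A"
  then obtain \<sigma> \<tau> where \<sigma>: "bij_betw \<sigma> {..<n} {..<n}" and \<tau>: "bij_betw \<tau> {..<m} {..<m}"
    and B_eq: "\<forall>i<n. \<forall>j<m. B i j = A (\<sigma> i) (\<tau> j)"
    unfolding perm_equiv_def by blast
  have rows_A: "row_val m A k = 2 ^ s - 1" if "k < n" for k
    using row_val_eq_first_if_zeta1[OF assms(5) that] assms(4) by simp
  have "row_val m A i \<le> row_val m B i" if i: "i < n" for i
  proof -
    have "\<sigma> i < n"
      using \<sigma> i by (auto simp: bij_betw_def)
    then have "card (row_support m A (\<sigma> i)) = s"
      using assms(1) rows_A by (intro card_row_support_if_row_val_eq_mask) (auto simp: binmat_def)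
    then have "card (row_support m B i) = s"
      using card_row_support_permute_columns[OF \<tau>, of B i A "\<sigma> i"] B_eq i by simp
    then show ?thesis
      using row_val_ge_card_row_support[of m B i] B i rows_A by (simp add: binmat_def)
  qed
  then show "lexordp_eq (rtuple n m A) (rtuple n m B)"
    unfolding rtuple_def
    by (intro lexordp_eq_if_list_all2_le) (simp add: list_all2_conv_all_nth)
qed

end
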